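(* Consider the weighted-median opinion dynamics on a row-stochastic influence matrix $W$ with node set $V=\{1,\dots,n\}$. Suppose the decisive graph $G_{\mathrm{decisive}}(W)$ has no globally reachable node. Then for every initial condition $x(0)\in\mathbb R^n$ whose entries are pairwise distinct, the solution $x(t)$ almost surely reaches a disagreement equilibrium in finite time.
   Context: A matrix $W=(w_{ij})_{n\times n}$ is row-stochastic if $w_{ij}\ge 0$ for all $i,j$ and $\sum_{j=1}^n w_{ij}=1$ for every $i$. Out-neighbour set: $N_i=\{j\in V: w_{ij}\ne 0\}$. A link $(i,j)$ with $j\in N_i$ is decisive if there exists $\theta\subseteq N_i$ with $j\in\theta$, $\sum_{k\in\theta}w_{ik}\ge 1/2$, and $\sum_{k\in\theta\setminus\{j\}}w_{ik}<1/2$. Otherwise the link is indecisive. $G_{\mathrm{decisive}}(W)$ is the directed graph on $V$ whose edges are exactly the decisive links $(i,j)$, directed from $i$ to $j$. A node $v$ is globally reachable if every other node has a directed path to $v$. A weighted median of $x\in\mathbb R^n$ with respect to row $i$ of $W$ is any $y\in\{x_1,\dots,x_n\}$ satisfying $\sum_{j:\,x_j<y}w_{ij}\le 1/2$ and $\sum_{j:\,x_j>y}w_{ij}\le 1/2$. $\mathrm{Med}_i(x;W)$ denotes this weighted median when it is unique. When it is not unique, $\mathrm{Med}_i(x;W)$ denotes the weighted median closest to $x_i$, which is then uniquely determined. Weighted-median opinion dynamics: given $x(0)\in\mathbb R^n$, at each time step $t+1$ ($t=0,1,2,\dots$) an index $i$ is drawn uniformly at random from $\{1,\dots,n\}$,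 independently of the past. Then $x_i(t+1)=\mathrm{Med}_i(x(t);W)$ and $x_j(t+1)=x_j(t)$ for $j\ne i$. An equilibrium is a vector $x^*$ with $x^*_i=\mathrm{Med}_i(x^*;W)$ for all $i$. A disagreement equilibrium is an equilibrium whose entries are not all equal. *)

theory Defs
  imports "HOL-Probability.Probability"
begin

text \<open>Nodes are the elements of a finite type 'n (V = UNIV). Matrices are functions
'n => 'n => real, opinion vectors are functions 'n => real.\<close>

definition row_stochastic :: "('n::finite \<Rightarrow> 'n \<Rightarrow> real) \<Rightarrow> bool" where
  "row_stochastic W \<longleftrightarrow> (\<forall>i j. W i j \<ge> 0) \<and> (\<forall>i. (\<Sum>j\<in>UNIV. W i j) = 1)"

definition out_nbrs :: "('n::finite \<Rightarrow> 'n \<Rightarrow> real) \<Rightarrow> 'n \<Rightarrow> 'n set" where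
  "out_nbrs W i = {j. W i j \<noteq> 0}"

definition decisive_link :: "('n::finite \<Rightarrow> 'n \<Rightarrow> real) \<Rightarrow> 'n \<Rightarrow> 'n \<Rightarrow> bool" where
  "decisive_link W i j \<longleftrightarrow> j \<in> out_nbrs W i \<and>
     (\<exists>\<theta>. \<theta> \<subseteq> out_nbrs W i \<and> j \<in> \<theta> \<and> (\<Sum>k\<in>\<theta>. W i k) \<ge> 1/2
          \<and> (\<Sum>k\<in>\<theta> - {j}. W i k) < 1/2)"

definition G_decisive :: "('n::finite \<Rightarrow> 'n \<Rightarrow> real) \<Rightarrow> ('n \<times> 'n) set" where
  "G_decisive W = {(i, j). decisive_link W i j}"

definition globally_reachable :: "('n \<times> 'n) set \<Rightarrow> 'n \<Rightarrow> bool" where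
  "globally_reachable E v \<longleftrightarrow> (\<forall>u. u \<noteq> v \<longrightarrow> (u, v) \<in> E\<^sup>+)"

definition is_wmedian :: "('n::finite \<Rightarrow> 'n \<Rightarrow> real) \<Rightarrow> 'n \<Rightarrow> ('n \<Rightarrow> real) \<Rightarrow> real \<Rightarrow> bool" where
  "is_wmedian W i x y \<longleftrightarrow> y \<in> range x \<and>
     (\<Sum>j\<in>{j. x j < y}. W i j) \<le> 1/2 \<and> (\<Sum>j\<in>{j. x j > y}. W i j) \<le> 1/2"

definition Med :: "('n::finite \<Rightarrow> 'n \<Rightarrow> real) \<Rightarrow> 'n \<Rightarrow> ('n \<Rightarrow> real) \<Rightarrow> real" where
  "Med W i x = (if \<exists>!y. is_wmedian W i x y then (THE y. is_wmedian W i x y)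
     else (THE y. is_wmedian W i x y \<and>
             (\<forall>z. is_wmedian W i x z \<longrightarrow> \<bar>y - x i\<bar> \<le> \<bar>z - x i\<bar>)))"

primrec traj :: "('n::finite \<Rightarrow> 'n \<Rightarrow> real) \<Rightarrow> ('n \<Rightarrow> real) \<Rightarrow> 'n stream \<Rightarrow> nat \<Rightarrow> ('n \<Rightarrow> real)" where
  "traj W x0 \<omega> 0 = x0"
| "traj W x0 \<omega> (Suc t) = (let x = traj W x0 \<omega> t; i = \<omega> !! t in x(i := Med W i x))"

definition equilibrium :: "('n::finite \<Rightarrow> 'n \<Rightarrow> real) \<Rightarrow> ('n \<Rightarrow> real) \<Rightarrow> bool" where
  "equilibrium W x \<longleftrightarrow> (\<forall>i. x i = Med W i x)"

definition disagreement_equilibrium :: "('n::finite \<Rightarrow> 'n \<Rightarrow> real) \<Rightarrow> ('n \<Rightarrow> real) \<Rightarrow> bool" where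
  "disagreement_equilibrium W x \<longleftrightarrow> equilibrium W x \<and> (\<exists>i j. x i \<noteq> x j)"

definition index_process :: "'n::finite stream measure" where
  "index_process = stream_space (measure_pmf (pmf_of_set (UNIV :: 'n set)))"

end

theory Submission
  imports Defs
begin

text \<open>
  A weighted median of row \<open>i\<close> is either \<open>x i\<close> itself or the opinion of an out-neighbour
  reached by a decisive link, so at every time the opinion of node \<open>k\<close> is the initial opinion
  of a node decisively reachable from \<open>k\<close>. If no node is globally reachable in the decisive
  graph, two nodes have disjoint decisive reach sets; with pairwise distinct initial opinions
  these two nodes disagree forever.

  All states lie in the finite set of functions into the initial opinions. From each state some
  finite sequence of updates reaches an equilibrium: first raise opinions lying below their
  median until none does, then lower opinions lying above their median, which keeps every
  opinion at or above its median because the median is monotone. Concatenating such sequences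
  gives one word that drives every state to an equilibrium, and equilibria are absorbing. An
  i.i.d. uniform index sequence almost surely contains this word, so almost surely an equilibrium
  is reached, and since the two nodes above disagree it is a disagreement equilibrium.
\<close>

lemma sum_threshold_pivot:
  fixes f :: "'a \<Rightarrow> real"
  assumes "finite B" "sum f A < c" "c \<le> sum f (A \<union> B)"
  shows "\<exists>\<theta> j. A \<subseteq> \<theta> \<and> \<theta> \<subseteq> A \<union> B \<and> j \<in> \<theta> - A \<and> c \<le> sum f \<theta> \<and> sum f (\<theta> - {j}) < c"
  using assms(1,3)
proof (induction B rule: finite_induct)
  case empty
  then show ?case using assms(2) by simp
next
  case (insert b B)
  show ?case
  proof (cases "c \<le> sum f (A \<union> B)")
    case True
    then show ?thesis using insert.IH by blast
  next
    case False
    then have "b \<notin> A \<union> B" using insert.prems by (metis insert_absorb Un_insert_right)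
    moreover have "(A \<union> insert b B) - {b} = A \<union> B" using \<open>b \<notin> A \<union> B\<close> by auto
    ultimately show ?thesis using False insert.prems by (intro exI[of _ "A \<union> insert b B"] exI[of _ b]) auto
  qed
qed

lemma sum_card_strict_mono:
  fixes A B :: "'a::finite \<Rightarrow> 'b set"
  assumes "\<And>j. finite (A j)" "\<And>j. B j \<subseteq> A j" "B k \<subset> A k"
  shows "(\<Sum>j\<in>UNIV. card (B j)) < (\<Sum>j\<in>UNIV. card (A j))"
proof (rule sum_strict_mono_ex1)
  show "\<forall>j\<in>UNIV. card (B j) \<le> card (A j)" using assms(1,2) by (simp add: card_mono)
  show "\<exists>j\<in>UNIV. card (B j) < card (A j)" using assms(1,3) psubset_card_mono by blast
qed simp

lemma exists_reachable_sink:
  fixes R :: "('a::finite \<times> 'a) set"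
  shows "\<exists>v. (u, v) \<in> R\<^sup>* \<and> (\<forall>w. (v, w) \<in> R\<^sup>* \<longrightarrow> (w, v) \<in> R\<^sup>*)"
proof -
  obtain v where v: "(u, v) \<in> R\<^sup>*"
    and min: "\<forall>y. (u, y) \<in> R\<^sup>* \<longrightarrow> card (R\<^sup>* `` {v}) \<le> card (R\<^sup>* `` {y})"
    using ex_has_least_nat[of "\<lambda>y. (u, y) \<in> R\<^sup>*" u "\<lambda>y. card (R\<^sup>* `` {y})"] by auto
  have "(w, v) \<in> R\<^sup>*" if "(v, w) \<in> R\<^sup>*" for w
  proof -
    have "R\<^sup>* `` {w} \<subseteq> R\<^sup>* `` {v}" using that by (auto intro: rtrancl_trans)
    moreover have "card (R\<^sup>* `` {v}) \<le> card (R\<^sup>* `` {w})" using min v that by (meson rtrancl_trans)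
    ultimately have "R\<^sup>* `` {w} = R\<^sup>* `` {v}" by (intro card_seteq) auto
    then show ?thesis by auto
  qed
  then show ?thesis using v by blast
qed

lemma disjoint_reach_if_not_globally_reachable:
  fixes R :: "('a::finite \<times> 'a) set"
  assumes "\<forall>v. \<not> globally_reachable R v"
  shows "\<exists>u v. R\<^sup>* `` {u} \<inter> R\<^sup>* `` {v} = {}"
proof -
  obtain v where sink: "\<forall>w. (v, w) \<in> R\<^sup>* \<longrightarrow> (w, v) \<in> R\<^sup>*"
    using exists_reachable_sink by blast
  obtain u where "u \<noteq> v" "(u, v) \<notin> R\<^sup>+"
    using assms unfolding globally_reachable_def by blast
  then have "(u, v) \<notin> R\<^sup>*" by (auto simp: rtrancl_eq_or_trancl)
  then have "R\<^sup>* `` {u} \<inter> R\<^sup>* `` {v} = {}"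
    using sink by (auto intro: rtrancl_trans)
  then show ?thesis by blast
qed

section \<open>Fixed words occur almost surely in i.i.d. streams\<close>

context
  fixes p :: "'a::countable pmf"
begin

lemma sets_stream_space_pmf_Collect:
  "Measurable.pred (stream_space (measure_pmf p)) P \<Longrightarrow> {\<omega>. P \<omega>} \<in> sets (stream_space (measure_pmf p))"
  by (drule predE) (simp add: space_stream_space)

lemma emeasure_stream_space_pmf_Stream:
  assumes [measurable]: "X \<in> sets (stream_space (measure_pmf p))"
  shows "emeasure (stream_space (measure_pmf p)) {\<omega>. shd \<omega> \<in> A \<and> stl \<omega> \<in> X}
    = emeasure (measure_pmf p) A * emeasure (stream_space (measure_pmf p)) X"
proof -
  let ?S = "stream_space (measure_pmf p)"
  have "{\<omega>. shd \<omega> \<in> A \<and> stl \<omega> \<in> X} \<in> sets ?S" by (rule sets_stream_space_pmf_Collect) measurable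
  then have "emeasure ?S {\<omega>. shd \<omega> \<in> A \<and> stl \<omega> \<in> X}
      = (\<integral>\<^sup>+t. emeasure ?S {\<omega>\<in>space ?S. t ## \<omega> \<in> {\<omega>. shd \<omega> \<in> A \<and> stl \<omega> \<in> X}} \<partial>measure_pmf p)"
    by (rule prob_space.emeasure_stream_space[OF prob_space_measure_pmf])
  also have "\<dots> = (\<integral>\<^sup>+t. emeasure ?S X * indicator A t \<partial>measure_pmf p)"
    by (intro nn_integral_cong) (simp add: space_stream_space split: split_indicator)
  also have "\<dots> = emeasure ?S X * emeasure (measure_pmf p) A"
    by (rule nn_integral_cmult_indicator) simp
  finally show ?thesis by (simp add: mult.commute)
qed

lemma emeasure_stream_space_pmf_sdrop:
  assumes [measurable]: "X \<in> sets (stream_space (measure_pmf p))"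
  shows "emeasure (stream_space (measure_pmf p)) {\<omega>. sdrop m \<omega> \<in> X} = emeasure (stream_space (measure_pmf p)) X"
proof (induction m)
  case (Suc m)
  let ?S = "stream_space (measure_pmf p)"
  have "{\<omega>. sdrop m \<omega> \<in> X} \<in> sets ?S" by (rule sets_stream_space_pmf_Collect) measurable
  have "emeasure ?S {\<omega>. sdrop (Suc m) \<omega> \<in> X} = emeasure ?S {\<omega>. shd \<omega> \<in> UNIV \<and> stl \<omega> \<in> {\<omega>. sdrop m \<omega> \<in> X}}"
    by simp
  also have "\<dots> = emeasure (measure_pmf p) UNIV * emeasure ?S {\<omega>. sdrop m \<omega> \<in> X}"
    by (rule emeasure_stream_space_pmf_Stream) fact
  finally show ?case
    using Suc.IH by (simp add: measure_pmf.emeasure_space_1[simplified])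
qed simp

lemma emeasure_stream_space_pmf_stake:
  assumes [measurable]: "X \<in> sets (stream_space (measure_pmf p))"
  shows "emeasure (stream_space (measure_pmf p)) {\<omega>. stake (length w) \<omega> = w \<and> sdrop (length w) \<omega> \<in> X}
    = ennreal (prod_list (map (pmf p) w)) * emeasure (stream_space (measure_pmf p)) X"
proof (induction w)
  case (Cons a w)
  let ?S = "stream_space (measure_pmf p)" and ?B = "{\<omega>. stake (length w) \<omega> = w \<and> sdrop (length w) \<omega> \<in> X}"
  have "?B \<in> sets ?S" by (rule sets_stream_space_pmf_Collect) measurable
  have "emeasure ?S {\<omega>. stake (length (a # w)) \<omega> = a # w \<and> sdrop (length (a # w)) \<omega> \<in> X}
      = emeasure ?S {\<omega>. shd \<omega> \<in> {a} \<and> stl \<omega> \<in> ?B}"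
    by (rule arg_cong[where f = "emeasure ?S"]) auto
  also have "\<dots> = emeasure (measure_pmf p) {a} * emeasure ?S ?B"
    by (rule emeasure_stream_space_pmf_Stream) fact
  finally show ?case
    using Cons.IH by (simp add: emeasure_pmf_single ennreal_mult' mult.assoc)
qed simp

theorem AE_stream_space_pmf_occurs:
  assumes "set w \<subseteq> set_pmf p"
  shows "AE \<omega> in stream_space (measure_pmf p). \<exists>t. stake (length w) (sdrop t \<omega>) = w"
proof -
  let ?S = "stream_space (measure_pmf p)"
  interpret S: prob_space ?S
    by (rule prob_space.prob_space_stream_space) (rule prob_space_measure_pmf)
  define N where "N = {\<omega>. \<forall>t. stake (length w) (sdrop t \<omega>) \<noteq> w}"
  define c where "c = prod_list (map (pmf p) w)"
  have "c > 0"
    using assms unfolding c_def by (induction w) (auto simp: set_pmf_iff pmf_nonneg less_le)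
  have [measurable]: "N \<in> sets ?S" unfolding N_def by (rule sets_stream_space_pmf_Collect) measurable
  (* Avoiding w forever means avoiding it after the first block and not starting with it;
     by independence of the first block this gives P N \<le> (1 - c) P N. *)
  define D where "D = {\<omega>. sdrop (length w) \<omega> \<in> N}"
  define C where "C = {\<omega>. stake (length w) \<omega> = w \<and> sdrop (length w) \<omega> \<in> N}"
  have D_sets: "D \<in> sets ?S"
    unfolding D_def by (rule sets_stream_space_pmf_Collect) measurable
  have C_sets: "C \<in> sets ?S"
    unfolding C_def by (rule sets_stream_space_pmf_Collect) measurable
  have "N \<subseteq> D - C"
  proof
    fix \<omega> assume "\<omega> \<in> N"
    then have "stake (length w) (sdrop t \<omega>) \<noteq> w" for t unfolding N_def by simp
    from this[of "length w + _"] this[of 0] show "\<omega> \<in> D - C"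
      unfolding N_def C_def D_def by (simp add: sdrop_add)
  qed
  then have "S.prob N \<le> S.prob (D - C)"
    using D_sets C_sets by (intro S.finite_measure_mono) simp_all
  also have "\<dots> = S.prob D - S.prob C"
    by (rule S.finite_measure_Diff) (fact D_sets, fact C_sets, auto simp: C_def D_def)
  also have "S.prob D = S.prob N"
    using emeasure_stream_space_pmf_sdrop[of N "length w"] unfolding D_def by (simp add: S.emeasure_eq_measure)
  also have "S.prob C = c * S.prob N"
    using emeasure_stream_space_pmf_stake[of N w] \<open>c > 0\<close>
    unfolding C_def c_def by (simp add: S.emeasure_eq_measure ennreal_mult'[symmetric])
  finally have "S.prob N = 0"
    using \<open>c > 0\<close> measure_nonneg[of ?S N] by (simp add: mult_le_0_iff)
  then have "N \<in> null_sets ?S"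
    by (simp add: S.emeasure_eq_measure null_sets_def)
  then show ?thesis
    by (rule AE_I') (auto simp: N_def)
qed

end

section \<open>Weighted medians\<close>

definition lower_median :: "('n::finite \<Rightarrow> 'n \<Rightarrow> real) \<Rightarrow> 'n \<Rightarrow> ('n \<Rightarrow> real) \<Rightarrow> real" where
  "lower_median W i x = Min {y \<in> range x. 1/2 \<le> sum (W i) {j. x j \<le> y}}"

definition upper_median :: "('n::finite \<Rightarrow> 'n \<Rightarrow> real) \<Rightarrow> 'n \<Rightarrow> ('n \<Rightarrow> real) \<Rightarrow> real" where
  "upper_median W i x = - lower_median W i (\<lambda>j. - x j)"

context
  fixes W :: "'n::finite \<Rightarrow> 'n \<Rightarrow> real"
  assumes W: "row_stochastic W"
begin

lemma weight_nonneg: "0 \<le> W i j"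
  using W unfolding row_stochastic_def by auto

lemma weight_mono: "A \<subseteq> B \<Longrightarrow> sum (W i) A \<le> sum (W i) B"
  by (rule sum_mono2) (auto simp: weight_nonneg)

lemma weight_Compl: "sum (W i) (- A) = 1 - sum (W i) A"
  using W sum_diff[of UNIV A "W i"] unfolding row_stochastic_def by (simp add: Compl_eq_Diff_UNIV)

lemma weight_out_nbrs: "sum (W i) (A \<inter> out_nbrs W i) = sum (W i) A"
  by (rule sum.mono_neutral_left) (auto simp: out_nbrs_def)

lemma lower_median_in_range: "lower_median W i x \<in> range x"
  and lower_median_weight: "1/2 \<le> sum (W i) {j. x j \<le> lower_median W i x}"
proof -
  have "{j. x j \<le> Max (range x)} = UNIV" by auto
  moreover have "Max (range x) \<in> range x" by (intro Max_in) auto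
  ultimately have "Max (range x) \<in> {y \<in> range x. 1/2 \<le> sum (W i) {j. x j \<le> y}}"
    using W unfolding row_stochastic_def by simp
  then have "lower_median W i x \<in> {y \<in> range x. 1/2 \<le> sum (W i) {j. x j \<le> y}}"
    unfolding lower_median_def by (intro Min_in) (simp, blast)
  then show "lower_median W i x \<in> range x" "1/2 \<le> sum (W i) {j. x j \<le> lower_median W i x}"
    by auto
qed

lemma weight_below_lower_median: "sum (W i) {j. x j < lower_median W i x} < 1/2"
proof (rule ccontr)
  let ?l = "lower_median W i x" and ?B = "x ` {j. x j < lower_median W i x}"
  assume heavy: "\<not> sum (W i) {j. x j < ?l} < 1/2"
  then have "{j. x j < ?l} \<noteq> {}" by force
  then have y: "Max ?B \<in> ?B" by (intro Max_in) auto
  have "{j. x j \<le> Max ?B} = {j. x j < ?l}"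
    using y by (auto intro: Max_ge)
  then have "?l \<le> Max ?B"
    using heavy y unfolding lower_median_def by (intro Min_le) auto
  then show False using y by auto
qed

lemma lower_median_le_iff: "lower_median W i x \<le> y \<longleftrightarrow> 1/2 \<le> sum (W i) {j. x j \<le> y}"
proof
  assume "lower_median W i x \<le> y"
  then have "sum (W i) {j. x j \<le> lower_median W i x} \<le> sum (W i) {j. x j \<le> y}"
    by (intro weight_mono) auto
  then show "1/2 \<le> sum (W i) {j. x j \<le> y}"
    using lower_median_weight[of i x] by linarith
next
  assume half: "1/2 \<le> sum (W i) {j. x j \<le> y}"
  show "lower_median W i x \<le> y"
  proof (rule ccontr)
    assume "\<not> lower_median W i x \<le> y"
    then have "sum (W i) {j. x j \<le> y} \<le> sum (W i) {j. x j < lower_median W i x}"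
      by (intro weight_mono) auto
    then show False
      using half weight_below_lower_median[of i x] by linarith
  qed
qed

lemma upper_median_in_range: "upper_median W i x \<in> range x"
  using lower_median_in_range[of i "\<lambda>j. - x j"] unfolding upper_median_def by auto

lemma le_upper_median_iff: "y \<le> upper_median W i x \<longleftrightarrow> 1/2 \<le> sum (W i) {j. y \<le> x j}"
  using lower_median_le_iff[of i "\<lambda>j. - x j" "- y"] unfolding upper_median_def by auto

lemma lower_le_upper_median: "lower_median W i x \<le> upper_median W i x"
proof -
  have "- {j. x j < lower_median W i x} = {j. lower_median W i x \<le> x j}" by auto
  then show ?thesis
    using weight_below_lower_median[of i x] weight_Compl[of i "{j. x j < lower_median W i x}"]
    by (simp add: le_upper_median_iff)
qed

lemma is_wmedian_iff:
  "is_wmedian W i x y \<longleftrightarrow> y \<in> range x \<and> lower_median W i x \<le> y \<and> y \<le> upper_median W i x"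
proof -
  have "- {j. x j \<le> y} = {j. y < x j}" "- {j. y \<le> x j} = {j. x j < y}" by auto
  then show ?thesis
    using weight_Compl[of i "{j. x j \<le> y}"] weight_Compl[of i "{j. y \<le> x j}"]
    unfolding is_wmedian_def lower_median_le_iff le_upper_median_iff by auto
qed

lemma Med_eq_clamp: "Med W i x = max (lower_median W i x) (min (x i) (upper_median W i x))"
proof -
  let ?l = "lower_median W i x" and ?h = "upper_median W i x"
  let ?c = "max ?l (min (x i) ?h)"
  have "?l \<le> ?h" by (rule lower_le_upper_median)
  have "?c \<in> {?l, x i, ?h}" by auto
  then have median: "is_wmedian W i x ?c"
    using \<open>?l \<le> ?h\<close> lower_median_in_range upper_median_in_range unfolding is_wmedian_iff by auto
  have closest: "\<bar>?c - x i\<bar> \<le> \<bar>z - x i\<bar>" if "is_wmedian W i x z" for z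
    using that \<open>?l \<le> ?h\<close> unfolding is_wmedian_iff by (auto simp: abs_if)
  have unique: "z = ?c" if "is_wmedian W i x z" "\<bar>z - x i\<bar> \<le> \<bar>?c - x i\<bar>" for z
    using that \<open>?l \<le> ?h\<close> unfolding is_wmedian_iff by (auto simp: abs_if max_def min_def split: if_splits)
  show ?thesis
  proof (cases "\<exists>!y. is_wmedian W i x y")
    case True
    then show ?thesis unfolding Med_def using median by (simp add: the1_equality)
  next
    case False
    have "(THE y. is_wmedian W i x y \<and> (\<forall>z. is_wmedian W i x z \<longrightarrow> \<bar>y - x i\<bar> \<le> \<bar>z - x i\<bar>)) = ?c"
      using median closest unique by (intro the_equality) blast+
    then show ?thesis unfolding Med_def using False by simp
  qed
qed

lemma Med_in_range: "Med W i x \<in> range x"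
  using lower_median_in_range[of i x] upper_median_in_range[of i x]
  unfolding Med_eq_clamp by (auto simp: max_def min_def)

lemma lower_median_mono:
  assumes "x \<le> x'"
  shows "lower_median W i x \<le> lower_median W i x'"
proof -
  let ?l = "lower_median W i x'"
  have "{j. x' j \<le> ?l} \<subseteq> {j. x j \<le> ?l}"
    using assms by (auto simp: le_fun_def intro: order_trans)
  then have "sum (W i) {j. x' j \<le> ?l} \<le> sum (W i) {j. x j \<le> ?l}" by (rule weight_mono)
  then show ?thesis
    using lower_median_weight[of i x'] unfolding lower_median_le_iff by linarith
qed

lemma upper_median_mono: "x \<le> x' \<Longrightarrow> upper_median W i x \<le> upper_median W i x'"
  using lower_median_mono[of "\<lambda>j. - x' j" "\<lambda>j. - x j" i] unfolding upper_median_def by (simp add: le_fun_def)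

lemma Med_mono: "x \<le> x' \<Longrightarrow> Med W i x \<le> Med W i x'"
  unfolding Med_eq_clamp using lower_median_mono upper_median_mono
  by (intro max.mono min.mono) (auto simp: le_fun_def)

lemma lower_median_decisive: "\<exists>j. decisive_link W i j \<and> x j = lower_median W i x"
proof -
  let ?l = "lower_median W i x" and ?N = "out_nbrs W i"
  let ?A = "{j. x j < ?l} \<inter> ?N" and ?B = "{j. x j = ?l} \<inter> ?N"
  have "?A \<union> ?B = {j. x j \<le> ?l} \<inter> ?N" by auto
  then have "sum (W i) ?A < 1/2" "1/2 \<le> sum (W i) (?A \<union> ?B)"
    using weight_below_lower_median[of i x] lower_median_weight[of i x] by (simp_all add: weight_out_nbrs)
  then obtain \<theta> j where "\<theta> \<subseteq> ?A \<union> ?B" "j \<in> \<theta> - ?A"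
      "1/2 \<le> sum (W i) \<theta>" "sum (W i) (\<theta> - {j}) < 1/2"
    using sum_threshold_pivot[where A = ?A and B = ?B and f = "W i" and c = "1/2"] by auto
  moreover from this have "\<theta> \<subseteq> ?N" "j \<in> \<theta>" "j \<in> ?N" "x j = ?l" by auto
  ultimately have "decisive_link W i j" unfolding decisive_link_def by blast
  then show ?thesis using \<open>x j = ?l\<close> by blast
qed

lemma upper_median_decisive: "\<exists>j. decisive_link W i j \<and> x j = upper_median W i x"
proof -
  obtain j where "decisive_link W i j" "- x j = lower_median W i (\<lambda>j. - x j)"
    using lower_median_decisive[of i "\<lambda>j. - x j"] by blast
  then show ?thesis unfolding upper_median_def by (intro exI[of _ j]) simp
qed

lemma Med_decisive: "Med W i x = x i \<or> (\<exists>j. decisive_link W i j \<and> Med W i x = x j)"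
  using lower_median_decisive[of i x] upper_median_decisive[of i x]
  unfolding Med_eq_clamp by (auto simp: max_def min_def)

end

section \<open>Median dynamics\<close>

definition med_update :: "('n::finite \<Rightarrow> 'n \<Rightarrow> real) \<Rightarrow> ('n \<Rightarrow> real) \<Rightarrow> 'n \<Rightarrow> ('n \<Rightarrow> real)" where
  "med_update W x i = x(i := Med W i x)"

lemma traj_Suc_med_update: "traj W x0 \<omega> (Suc t) = med_update W (traj W x0 \<omega> t) (\<omega> !! t)"
  by (simp add: Let_def med_update_def)

lemma traj_add_stake:
  "stake (length w) (sdrop t \<omega>) = w \<Longrightarrow> traj W x0 \<omega> (t + length w) = foldl (med_update W) (traj W x0 \<omega> t) w"
proof (induction w arbitrary: t)
  case Nil
  then show ?case by simp
next
  case (Cons a w)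
  then have "\<omega> !! t = a" "stake (length w) (sdrop (Suc t) \<omega>) = w"
    by (auto simp: sdrop_snth)
  then show ?case
    using Cons.IH[of "Suc t"] by (simp add: traj_Suc_med_update del: traj.simps)
qed

lemma equilibrium_foldl_med_update:
  assumes "equilibrium W x"
  shows "foldl (med_update W) x ws = x"
proof -
  have "med_update W x i = x" for i
    using assms fun_upd_idem unfolding med_update_def equilibrium_def by metis
  then show ?thesis by (induction ws) simp_all
qed

context
  fixes W :: "'n::finite \<Rightarrow> 'n \<Rightarrow> real"
  assumes W: "row_stochastic W"
begin

lemma med_update_range: "range (med_update W x i) \<subseteq> range x"
  using Med_in_range[OF W, of i x] by (auto simp: med_update_def)

lemma foldl_med_update_range: "range (foldl (med_update W) x ws) \<subseteq> range x"
proof (induction ws arbitrary: x)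
  case (Cons i ws)
  then show ?case using order_trans[OF Cons.IH med_update_range[of x i]] by simp
qed simp

lemma traj_range: "range (traj W x0 \<omega> t) \<subseteq> range x0"
proof (induction t)
  case (Suc t)
  then show ?case
    using med_update_range[of "traj W x0 \<omega> t" "\<omega> !! t"] by (simp add: traj_Suc_med_update del: traj.simps)
qed simp

lemma traj_in_decisive_reach: "traj W x0 \<omega> t k \<in> x0 ` ((G_decisive W)\<^sup>* `` {k})"
proof (induction t arbitrary: k)
  case 0
  then show ?case by auto
next
  case (Suc t)
  let ?x = "traj W x0 \<omega> t" and ?i = "\<omega> !! t"
  show ?case
  proof (cases "k = ?i")
    case False
    then show ?thesis using Suc.IH[of k] by (simp add: traj_Suc_med_update med_update_def del: traj.simps)
  next
    case True
    then have new: "traj W x0 \<omega> (Suc t) k = Med W k ?x"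
      by (simp add: traj_Suc_med_update med_update_def del: traj.simps)
    from Med_decisive[OF W, of k ?x] show ?thesis
    proof
      assume "Med W k ?x = ?x k"
      then show ?thesis using new Suc.IH[of k] by simp
    next
      assume "\<exists>j. decisive_link W k j \<and> Med W k ?x = ?x j"
      then obtain j where "(k, j) \<in> G_decisive W" "Med W k ?x = ?x j"
        by (auto simp: G_decisive_def)
      moreover from this(1) have "(G_decisive W)\<^sup>* `` {j} \<subseteq> (G_decisive W)\<^sup>* `` {k}"
        by (auto intro: converse_rtrancl_into_rtrancl)
      ultimately show ?thesis
        using new Suc.IH[of j] by auto
    qed
  qed
qed

lemma exists_word_Med_le:
  assumes "finite V" "range x \<subseteq> V"
  shows "\<exists>ws. \<forall>k. Med W k (foldl (med_update W) x ws) \<le> foldl (med_update W) x ws k"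
  using assms(2)
proof (induction "\<Sum>j\<in>UNIV. card {v\<in>V. x j < v}" arbitrary: x rule: less_induct)
  case less
  show ?case
  proof (cases "\<forall>k. Med W k x \<le> x k")
    case True
    then show ?thesis by (intro exI[of _ "[]"]) simp
  next
    case False
    then obtain k where k: "x k < Med W k x" by (auto simp: not_le)
    let ?x' = "med_update W x k"
    have "Med W k x \<in> V" using Med_in_range[OF W, of k x] less.prems by blast
    then have "{v\<in>V. ?x' k < v} \<subset> {v\<in>V. x k < v}"
      using k by (auto simp: med_update_def)
    moreover have "{v\<in>V. ?x' j < v} \<subseteq> {v\<in>V. x j < v}" for j
      using k by (auto simp: med_update_def)
    ultimately have "(\<Sum>j\<in>UNIV. card {v\<in>V. ?x' j < v}) < (\<Sum>j\<in>UNIV. card {v\<in>V. x j < v})"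
      using assms(1) by (intro sum_card_strict_mono[where k = k]) simp_all
    moreover have "range ?x' \<subseteq> V" using med_update_range less.prems by blast
    ultimately obtain ws where "\<forall>j. Med W j (foldl (med_update W) ?x' ws) \<le> foldl (med_update W) ?x' ws j"
      using less.hyps by blast
    then show ?thesis by (intro exI[of _ "k # ws"]) simp
  qed
qed

lemma exists_word_equilibrium_from_Med_le:
  assumes "finite V" "range x \<subseteq> V" "\<forall>k. Med W k x \<le> x k"
  shows "\<exists>ws. equilibrium W (foldl (med_update W) x ws)"
  using assms(2,3)
proof (induction "\<Sum>j\<in>UNIV. card {v\<in>V. v < x j}" arbitrary: x rule: less_induct)
  case less
  show ?case
  proof (cases "\<forall>k. Med W k x = x k")
    case True
    then show ?thesis by (intro exI[of _ "[]"]) (simp add: equilibrium_def)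
  next
    case False
    then obtain k where k: "Med W k x < x k" using less.prems(2) by (meson order.not_eq_order_implies_strict)
    let ?x' = "med_update W x k"
    have below: "?x' \<le> x" using k by (simp add: med_update_def le_fun_def)
    have super: "\<forall>j. Med W j ?x' \<le> ?x' j"
    proof
      fix j
      have "Med W j ?x' \<le> Med W j x" using below by (rule Med_mono[OF W])
      moreover have "Med W j x \<le> ?x' j" if "j \<noteq> k"
        using less.prems(2) that by (simp add: med_update_def)
      ultimately show "Med W j ?x' \<le> ?x' j"
        by (cases "j = k") (auto simp: med_update_def)
    qed
    have "Med W k x \<in> V" using Med_in_range[OF W, of k x] less.prems by blast
    then have "{v\<in>V. v < ?x' k} \<subset> {v\<in>V. v < x k}"
      using k by (auto simp: med_update_def)
    moreover have "{v\<in>V. v < ?x' j} \<subseteq> {v\<in>V. v < x j}" for j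
      using below[unfolded le_fun_def, rule_format, of j] by auto
    ultimately have "(\<Sum>j\<in>UNIV. card {v\<in>V. v < ?x' j}) < (\<Sum>j\<in>UNIV. card {v\<in>V. v < x j})"
      using assms(1) by (intro sum_card_strict_mono[where k = k]) simp_all
    moreover have "range ?x' \<subseteq> V" using med_update_range less.prems by blast
    ultimately obtain ws where "equilibrium W (foldl (med_update W) ?x' ws)"
      using less.hyps super by blast
    then show ?thesis by (intro exI[of _ "k # ws"]) simp
  qed
qed

lemma exists_word_equilibrium: "\<exists>ws. equilibrium W (foldl (med_update W) x ws)"
proof -
  have fin: "finite (range x)" by simp
  then obtain ws where super: "\<forall>k. Med W k (foldl (med_update W) x ws) \<le> foldl (med_update W) x ws k"
    using exists_word_Med_le by blast
  obtain ws' where "equilibrium W (foldl (med_update W) (foldl (med_update W) x ws) ws')"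
    using exists_word_equilibrium_from_Med_le[OF fin foldl_med_update_range super] by blast
  then show ?thesis by (intro exI[of _ "ws @ ws'"]) simp
qed

lemma exists_synchronizing_word: "finite F \<Longrightarrow> \<exists>w. \<forall>x\<in>F. equilibrium W (foldl (med_update W) x w)"
proof (induction F rule: finite_induct)
  case empty
  then show ?case by simp
next
  case (insert x F)
  then obtain w where w: "\<forall>y\<in>F. equilibrium W (foldl (med_update W) y w)" by blast
  obtain w' where w': "equilibrium W (foldl (med_update W) (foldl (med_update W) x w) w')"
    using exists_word_equilibrium by blast
  have "equilibrium W (foldl (med_update W) y (w @ w'))" if "y \<in> F" for y
    using w that equilibrium_foldl_med_update[of W "foldl (med_update W) y w" w'] by simp
  then have "\<forall>y\<in>insert x F. equilibrium W (foldl (med_update W) y (w @ w'))"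
    using w' by simp
  then show ?case by blast
qed

end

lemma traj_ne_if_decisive_reach_disjoint:
  assumes "row_stochastic W" "inj x0" "(G_decisive W)\<^sup>* `` {u} \<inter> (G_decisive W)\<^sup>* `` {v} = {}"
  shows "traj W x0 \<omega> t u \<noteq> traj W x0 \<omega> t v"
  using traj_in_decisive_reach[OF assms(1), of x0 \<omega> t u] traj_in_decisive_reach[OF assms(1), of x0 \<omega> t v]
    assms(2,3) by (auto simp: inj_eq)

theorem mainTheorem10:
  fixes W :: "'n::finite \<Rightarrow> 'n \<Rightarrow> real" and x0 :: "'n \<Rightarrow> real"
  assumes "row_stochastic W"
    and "\<forall>v. \<not> globally_reachable (G_decisive W) v"
    and "inj x0"
  shows "AE \<omega> in index_process. \<exists>t. disagreement_equilibrium W (traj W x0 \<omega> t)"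
proof -
  have "finite ((UNIV :: 'n set) \<rightarrow>\<^sub>E range x0)" by (rule finite_PiE) auto
  also have "(UNIV \<rightarrow>\<^sub>E range x0) = {x. range x \<subseteq> range x0}" by (auto simp: PiE_UNIV_domain)
  finally obtain w where w: "\<forall>x\<in>{x. range x \<subseteq> range x0}. equilibrium W (foldl (med_update W) x w)"
    using exists_synchronizing_word[OF assms(1)] by blast
  obtain u v where "(G_decisive W)\<^sup>* `` {u} \<inter> (G_decisive W)\<^sup>* `` {v} = {}"
    using disjoint_reach_if_not_globally_reachable[OF assms(2)] by blast
  then have apart: "traj W x0 \<omega> t u \<noteq> traj W x0 \<omega> t v" for \<omega> t
    by (rule traj_ne_if_decisive_reach_disjoint[OF assms(1,3)])
  have "disagreement_equilibrium W (traj W x0 \<omega> (t + length w))"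
    if "stake (length w) (sdrop t \<omega>) = w" for \<omega> t
  proof -
    have "equilibrium W (foldl (med_update W) (traj W x0 \<omega> t) w)"
      using w traj_range[OF assms(1)] by blast
    then show ?thesis
      using apart[of \<omega> "t + length w"] unfolding traj_add_stake[OF that] disagreement_equilibrium_def by blast
  qed
  moreover have "AE \<omega> in index_process. \<exists>t. stake (length w) (sdrop t \<omega>) = w"
    unfolding index_process_def by (rule AE_stream_space_pmf_occurs) simp
  ultimately show ?thesis
    by (auto elim!: eventually_mono)
qed

end
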